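(* Consider the entry game with $\mathcal{W}=\{1,2\}$, $\mathcal{X}=\{0,1\}$, $\mathcal{C}(w)=\mathcal{X}$ for all $w$, and $F(m,w,x)=-x(-3m^x\{1\}+w)$. For $q\in[0,1]$ let $\lambda_q=q\delta_2+(1-q)\delta_1$. Then for each $q\in[0,1]$, $\mathcal{M}(\lambda_q)=\{m_q\}$, where $m_q\in\mathcal{P}(\mathcal{W}\times\mathcal{X})$ is given by: if $q\le1/3$, $m_q\{(1,0)\}=2/3$, $m_q\{(1,1)\}=1/3-q$, $m_q\{(2,0)\}=0$, $m_q\{(2,1)\}=q$; if $1/3<q<2/3$, $m_q\{(1,0)\}=1-q$, $m_q\{(1,1)\}=0$, $m_q\{(2,0)\}=0$, $m_q\{(2,1)\}=q$; if $q\ge2/3$, $m_q\{(1,0)\}=1-q$, $m_q\{(1,1)\}=0$, $m_q\{(2,0)\}=q-2/3$, $m_q\{(2,1)\}=2/3$.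
   Context: $m^x$ denotes the second marginal of $m\in\mathcal{P}(\mathcal{W}\times\mathcal{X})$. For $\lambda\in\mathcal{P}(\mathcal{W})$, $\mathcal{M}(\lambda)$ (Cournot-Nash equilibria) is the set of $m\in\mathcal{P}(\mathcal{W}\times\mathcal{X})$ with first marginal $\lambda$ such that for $m$-a.e. $(w,x)$, $x\in\mathcal{C}(w)$ and $F(m,w,x)=\min_{y\in\mathcal{C}(w)}F(m,w,y)$. *)

theory Defs
  imports "HOL-Probability.Probability_Mass_Function"
begin

text \<open>Entry game: type space W = {1,2}, action space X = {0,1}, both embedded in nat.
  Probability measures on W x X are represented as pmfs on nat x nat supported in W x X.\<close>

definition W :: "nat set" where "W = {1, 2}"
definition X :: "nat set" where "X = {0, 1}"

definition C :: "nat \<Rightarrow> nat set" where "C w = X"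

definition marg_x :: "(nat \<times> nat) pmf \<Rightarrow> nat pmf" where
  "marg_x m = map_pmf snd m"

definition F :: "(nat \<times> nat) pmf \<Rightarrow> nat \<Rightarrow> nat \<Rightarrow> real" where
  "F m w x = - real x * (- 3 * measure_pmf.prob (marg_x m) {1} + real w)"

definition CN :: "nat pmf \<Rightarrow> (nat \<times> nat) pmf set" where
  "CN lam = {m. set_pmf m \<subseteq> W \<times> X \<and> map_pmf fst m = lam \<and>
     (AE p in measure_pmf m. snd p \<in> C (fst p) \<and>
        F m (fst p) (snd p) = Min (F m (fst p) ` C (fst p)))}"

definition lam :: "real \<Rightarrow> nat pmf" where
  "lam q = map_pmf (\<lambda>b. if b then 2 else 1) (bernoulli_pmf q)"

definition mq :: "real \<Rightarrow> nat \<Rightarrow> nat \<Rightarrow> real" where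
  "mq q w x =
    (if q \<le> 1/3 then
       (if (w, x) = (1, 0) then 2/3 else if (w, x) = (1, 1) then 1/3 - q
        else if (w, x) = (2, 0) then 0 else if (w, x) = (2, 1) then q else 0)
     else if q < 2/3 then
       (if (w, x) = (1, 0) then 1 - q else if (w, x) = (1, 1) then 0
        else if (w, x) = (2, 0) then 0 else if (w, x) = (2, 1) then q else 0)
     else
       (if (w, x) = (1, 0) then 1 - q else if (w, x) = (1, 1) then 0
        else if (w, x) = (2, 0) then q - 2/3 else if (w, x) = (2, 1) then 2/3 else 0))"

end

theory Submission imports Defs begin

text \<open>Only the total entry mass \<open>p = m{(1,1)} + m{(2,1)}\<close> enters the cost: staying out
  costs 0 and entering costs \<open>3p - w\<close>, so type \<open>w\<close> may enter only if \<open>3p \<le> w\<close> and may stay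
  out only if \<open>3p \<ge> w\<close>. If \<open>3p < 1\<close> everybody enters, so \<open>p = 1\<close>; if \<open>3p > 2\<close> nobody
  does, so \<open>p = 0\<close>; if \<open>1 < 3p < 2\<close> exactly type 2 enters, so \<open>p = q\<close>. Hence \<open>3p\<close> is 1,
  \<open>3q\<close> or 2 according as \<open>q \<le> 1/3\<close>, \<open>1/3 < q < 2/3\<close> or \<open>q \<ge> 2/3\<close>, and the marginal
  constraints then fix all four weights.\<close>

lemma W_times_X: "W \<times> X = {(1,0), (1,1), (2,0), (2,1)}"
  unfolding W_def X_def by auto

lemma pmf_exists_finite_support:
  fixes f :: "'a \<Rightarrow> real"
  assumes "finite S" and "\<And>x. 0 \<le> f x" and "\<And>x. x \<notin> S \<Longrightarrow> f x = 0" and "sum f S = 1"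
  shows "\<exists>p. \<forall>x. pmf p x = f x"
proof -
  have "(\<integral>\<^sup>+x. ennreal (f x) \<partial>count_space UNIV) = (\<Sum>x\<in>S. ennreal (f x))"
    using assms(1) by (rule nn_integral_count_space') (simp_all add: assms(3))
  also have "\<dots> = 1"
    using assms(2,4) by simp
  finally have "pmf (embed_pmf f) x = f x" for x
    by (rule pmf_embed_pmf[OF assms(2)])
  then show ?thesis
    by blast
qed

lemma measure_pmf_eq_sum_pmf:
  assumes "finite B" and "B \<subseteq> A" and "A \<inter> set_pmf m \<subseteq> B"
  shows "measure_pmf.prob m A = sum (pmf m) B"
proof -
  have "A \<inter> set_pmf m = B \<inter> set_pmf m"
    using assms by auto
  then have "measure_pmf.prob m A = measure_pmf.prob m B"
    by (metis measure_Int_set_pmf)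
  then show ?thesis
    using assms(1) by (simp add: measure_measure_pmf_finite)
qed

lemma pmf_map_fst:
  assumes "set_pmf m \<subseteq> W \<times> X"
  shows "pmf (map_pmf fst m) w = pmf m (w, 0) + pmf m (w, 1)"
proof -
  have "pmf (map_pmf fst m) w = measure_pmf.prob m (fst -` {w})"
    by (rule pmf_map)
  also have "\<dots> = sum (pmf m) {(w, 0), (w, 1)}"
    using assms by (intro measure_pmf_eq_sum_pmf) (auto simp: X_def)
  finally show ?thesis
    by simp
qed

lemma prob_marg_x_entry:
  assumes "set_pmf m \<subseteq> W \<times> X"
  shows "measure_pmf.prob (marg_x m) {1} = pmf m (1, 1) + pmf m (2, 1)"
proof -
  have "measure_pmf.prob (marg_x m) {1} = measure_pmf.prob m (snd -` {1})"
    by (simp add: marg_x_def)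
  also have "\<dots> = sum (pmf m) {(1, 1), (2, 1)}"
    using assms by (intro measure_pmf_eq_sum_pmf) (auto simp: W_def)
  finally show ?thesis
    by simp
qed

lemma pmf_lam:
  assumes "0 \<le> q" and "q \<le> 1"
  shows "pmf (lam q) w = (if w = 1 then 1 - q else if w = 2 then q else 0)"
proof -
  have "(\<lambda>b::bool. if b then 2 else (1::nat)) -` {w} =
      (if w = 1 then {False} else if w = 2 then {True} else {})"
    by (auto split: if_splits)
  then show ?thesis
    using assms by (simp add: lam_def pmf_map measure_pmf_single)
qed

lemma map_fst_eq_lam_iff:
  assumes "set_pmf m \<subseteq> W \<times> X" and "0 \<le> q" and "q \<le> 1"
  shows "map_pmf fst m = lam q \<longleftrightarrow>
    pmf m (1, 0) + pmf m (1, 1) = 1 - q \<and> pmf m (2, 0) + pmf m (2, 1) = q"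
proof -
  have outside: "pmf m (w, x) = 0" if "w \<noteq> 1" "w \<noteq> 2" for w x
    using that assms(1) by (auto simp: W_def set_pmf_iff)
  have "map_pmf fst m = lam q \<longleftrightarrow>
      (\<forall>w. pmf m (w, 0) + pmf m (w, 1) = (if w = 1 then 1 - q else if w = 2 then q else 0))"
    unfolding pmf_eq_iff pmf_map_fst[OF assms(1)] pmf_lam[OF assms(2,3)] ..
  also have "\<dots> \<longleftrightarrow> pmf m (1, 0) + pmf m (1, 1) = 1 - q \<and> pmf m (2, 0) + pmf m (2, 1) = q"
  proof
    assume "\<forall>w. pmf m (w, 0) + pmf m (w, 1) = (if w = 1 then 1 - q else if w = 2 then q else 0)"
    from this[rule_format, of 1] this[rule_format, of 2]
    show "pmf m (1, 0) + pmf m (1, 1) = 1 - q \<and> pmf m (2, 0) + pmf m (2, 1) = q"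
      by simp
  qed (simp add: outside)
  finally show ?thesis .
qed

lemma F_eq_Min_iff:
  assumes "x \<in> X"
  shows "F m w x = Min (F m w ` C w) \<longleftrightarrow>
    (x = 0 \<longrightarrow> real w \<le> 3 * measure_pmf.prob (marg_x m) {1}) \<and>
    (x = 1 \<longrightarrow> 3 * measure_pmf.prob (marg_x m) {1} \<le> real w)"
proof -
  have "F m w ` C w = {0, 3 * measure_pmf.prob (marg_x m) {1} - real w}"
    by (auto simp: C_def X_def F_def)
  then show ?thesis
    using assms by (auto simp: X_def F_def min_def)
qed

definition entry_equilibrium :: "real \<Rightarrow> real \<Rightarrow> real \<Rightarrow> real \<Rightarrow> real \<Rightarrow> bool" where
  "entry_equilibrium q a b c d \<longleftrightarrow>
    0 \<le> a \<and> 0 \<le> b \<and> 0 \<le> c \<and> 0 \<le> d \<and> a + b = 1 - q \<and> c + d = q \<and>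
    (0 < a \<longrightarrow> 1 \<le> 3 * (b + d)) \<and> (0 < b \<longrightarrow> 3 * (b + d) \<le> 1) \<and>
    (0 < c \<longrightarrow> 2 \<le> 3 * (b + d)) \<and> (0 < d \<longrightarrow> 3 * (b + d) \<le> 2)"

lemma AE_best_response_iff:
  assumes "set_pmf m \<subseteq> W \<times> X"
  defines "p \<equiv> pmf m (1, 1) + pmf m (2, 1)"
  shows "(AE y in measure_pmf m. snd y \<in> C (fst y) \<and>
      F m (fst y) (snd y) = Min (F m (fst y) ` C (fst y))) \<longleftrightarrow>
    (0 < pmf m (1, 0) \<longrightarrow> 1 \<le> 3 * p) \<and> (0 < pmf m (1, 1) \<longrightarrow> 3 * p \<le> 1) \<and>
    (0 < pmf m (2, 0) \<longrightarrow> 2 \<le> 3 * p) \<and> (0 < pmf m (2, 1) \<longrightarrow> 3 * p \<le> 2)"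
proof -
  have support: "set_pmf m = {y \<in> W \<times> X. 0 < pmf m y}"
    using assms(1) by (auto simp: set_pmf_iff order_less_le)
  have best_response: "(snd y \<in> C (fst y) \<and> F m (fst y) (snd y) = Min (F m (fst y) ` C (fst y)))
      \<longleftrightarrow> (snd y = 0 \<longrightarrow> real (fst y) \<le> 3 * p) \<and> (snd y = 1 \<longrightarrow> 3 * p \<le> real (fst y))"
    if "y \<in> W \<times> X" for y
    using that F_eq_Min_iff[of "snd y" m "fst y"] prob_marg_x_entry[OF assms(1)]
    by (auto simp: C_def p_def)
  have "(AE y in measure_pmf m. snd y \<in> C (fst y) \<and>
      F m (fst y) (snd y) = Min (F m (fst y) ` C (fst y))) \<longleftrightarrow>
    (\<forall>(w, x)\<in>W \<times> X. 0 < pmf m (w, x) \<longrightarrow>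
      (x = 0 \<longrightarrow> real w \<le> 3 * p) \<and> (x = 1 \<longrightarrow> 3 * p \<le> real w))"
    unfolding AE_measure_pmf_iff support using best_response by auto
  then show ?thesis
    by (simp add: W_times_X)
qed

lemma CN_lam_iff:
  assumes "0 \<le> q" and "q \<le> 1"
  shows "m \<in> CN (lam q) \<longleftrightarrow> set_pmf m \<subseteq> W \<times> X \<and>
    entry_equilibrium q (pmf m (1, 0)) (pmf m (1, 1)) (pmf m (2, 0)) (pmf m (2, 1))"
  unfolding CN_def entry_equilibrium_def
  using map_fst_eq_lam_iff[OF _ assms] AE_best_response_iff by auto

lemma entry_equilibrium_unique:
  assumes "entry_equilibrium q a b c d"
  shows "a = mq q 1 0 \<and> b = mq q 1 1 \<and> c = mq q 2 0 \<and> d = mq q 2 1"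
  using assms unfolding entry_equilibrium_def mq_def
  by (cases "0 < a"; cases "0 < b"; cases "0 < c"; cases "0 < d"; simp; linarith)

lemma entry_equilibrium_mq:
  assumes "0 \<le> q" and "q \<le> 1"
  shows "entry_equilibrium q (mq q 1 0) (mq q 1 1) (mq q 2 0) (mq q 2 1)"
  using assms unfolding entry_equilibrium_def mq_def by auto

lemma mq_nonneg: "0 \<le> q \<Longrightarrow> q \<le> 1 \<Longrightarrow> 0 \<le> mq q w x"
  by (simp add: mq_def)

lemma mq_outside: "(w, x) \<notin> W \<times> X \<Longrightarrow> mq q w x = 0"
  by (auto simp: mq_def W_times_X)

lemma pmf_mq_exists:
  assumes "0 \<le> q" and "q \<le> 1"
  shows "\<exists>m. \<forall>w x. pmf m (w, x) = mq q w x"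
proof -
  have "\<exists>m. \<forall>y. pmf m y = case_prod (mq q) y"
  proof (rule pmf_exists_finite_support)
    show "finite (W \<times> X)"
      by (simp add: W_times_X)
    show "0 \<le> case_prod (mq q) y" for y
      using mq_nonneg[OF assms] by (simp split: prod.split)
    show "case_prod (mq q) y = 0" if "y \<notin> W \<times> X" for y
      using that mq_outside by (cases y) simp
    show "sum (case_prod (mq q)) (W \<times> X) = 1"
      using entry_equilibrium_mq[OF assms] by (simp add: W_times_X entry_equilibrium_def)
  qed
  then show ?thesis
    by auto
qed

lemma pmf_CN_lam:
  assumes "0 \<le> q" and "q \<le> 1" and "m \<in> CN (lam q)"
  shows "pmf m (w, x) = mq q w x"
proof -
  have support: "set_pmf m \<subseteq> W \<times> X" and
    "entry_equilibrium q (pmf m (1, 0)) (pmf m (1, 1)) (pmf m (2, 0)) (pmf m (2, 1))"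
    using assms(3) unfolding CN_lam_iff[OF assms(1,2)] by blast+
  from entry_equilibrium_unique[OF this(2)] show ?thesis
  proof (cases "(w, x) \<in> W \<times> X")
    case False
    then show ?thesis
      using support mq_outside by (metis set_pmf_iff subsetD)
  qed (auto simp: W_times_X)
qed

theorem proposition3p13:
  fixes q :: real
  assumes "0 \<le> q" and "q \<le> 1"
  shows "\<exists>m. (\<forall>w x. pmf m (w, x) = mq q w x) \<and> CN (lam q) = {m}"
proof -
  obtain m where m: "pmf m (w, x) = mq q w x" for w x
    using pmf_mq_exists[OF assms] by blast
  have "set_pmf m \<subseteq> W \<times> X"
    using m mq_outside by (metis set_pmf_iff subsetI surj_pair)
  then have "m \<in> CN (lam q)"
    unfolding CN_lam_iff[OF assms] m using entry_equilibrium_mq[OF assms] by blast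
  moreover have "m' = m" if "m' \<in> CN (lam q)" for m'
    using pmf_CN_lam[OF assms that] m by (intro pmf_eqI) (metis surj_pair)
  ultimately show ?thesis
    using m by blast
qed

end
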